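(* Let $M:\ u=z\bar z+\sum_{j,k\geq2}F_{j,k}z^j\bar z^k$ and $M':\ u'=z'\bar z'+\sum_{j,k\geq2}F'_{j,k}z'^j\bar z'^k$ be rigid real-analytic hypersurfaces in $\mathbb{C}^2$. If a local rigid biholomorphism $(z,w)\mapsto(f(z),\rho w+g(z))=:(z',w')$ with $\rho\in\mathbb{R}\setminus\{0\}$ and $f(0)=g(0)=0$ maps $M$ into $M'$, then there exist $\rho\in\mathbb{R}_{>0}$ and $\varphi\in\mathbb{R}$ such that $z'=\rho^{1/2}e^{i\varphi}z$ and $w'=\rho w$.
   Context: Coordinates on $\mathbb{C}^2$ are $(z,w)$, $w=u+iv$, and similarly primed; the graphing functions are real-valued ($\overline{F_{j,k}}=F_{k,j}$). *)

theory Defs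
  imports "HOL-Complex_Analysis.Complex_Analysis"
begin

definition idx2 :: "(nat \<times> nat) set" where
  "idx2 = {(j,k). 2 \<le> j \<and> 2 \<le> k}"

text \<open>Coefficients F_{j,k} of a real-valued convergent power series
  (conjugation symmetry + convergence on some polydisc).\<close>
definition rigid_coeffs :: "(nat \<Rightarrow> nat \<Rightarrow> complex) \<Rightarrow> bool" where
  "rigid_coeffs F \<longleftrightarrow> (\<forall>j k. F k j = cnj (F j k)) \<and>
     (\<exists>r>0. (\<lambda>(j,k). norm (F j k) * r ^ (j + k)) summable_on idx2)"

definition graph_fun :: "(nat \<Rightarrow> nat \<Rightarrow> complex) \<Rightarrow> complex \<Rightarrow> real" where
  "graph_fun F z = Re (z * cnj z + (\<Sum>\<^sub>\<infinity>(j,k)\<in>idx2. F j k * z ^ j * cnj z ^ k))"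

text \<open>The rigid hypersurface M: u = graph_fun F z, where w = u + i v.\<close>
definition rigid_hyp :: "(nat \<Rightarrow> nat \<Rightarrow> complex) \<Rightarrow> (complex \<times> complex) set" where
  "rigid_hyp F = {(z,w). Re w = graph_fun F z}"

end

theory Submission
  imports Defs
begin

text \<open>
  Replacing cnj z by an independent variable \<zeta> turns the defect
  \<rho> u + Re g(z) - graph_fun F' (f z) of the mapping equation at the point (z, u) of M into a
  function \<Phi>(z, \<zeta>) that is holomorphic in each variable and along every complex line
  t \<mapsto> (t e, t cnj e), and that vanishes on the totally real plane \<zeta> = cnj z. Such a line
  meets that plane in its real points, so \<Phi> vanishes wherever |z| = |\<zeta>|, and holomorphy in
  each variable spreads the zeros from these circles to the whole bidisc. At \<zeta> = 0 only
  g(z)/2 survives, so g = 0; as the higher order terms are O(\<zeta>^2), the \<zeta>-derivative at 0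
  gives \<rho> z = f(z) cnj (f'(0)), so f is linear with |f'(0)|^2 = \<rho>.
\<close>

definition polydisc_summable :: "(nat \<Rightarrow> nat \<Rightarrow> complex) \<Rightarrow> real \<Rightarrow> bool" where
  "polydisc_summable F r \<longleftrightarrow> 0 < r \<and> (\<lambda>(j,k). norm (F j k) * r ^ (j + k)) summable_on idx2"

definition rigid_series :: "(nat \<Rightarrow> nat \<Rightarrow> complex) \<Rightarrow> complex \<Rightarrow> complex \<Rightarrow> complex" where
  "rigid_series F z \<zeta> = (\<Sum>\<^sub>\<infinity>(j,k)\<in>idx2. F j k * z ^ j * \<zeta> ^ k)"

lemma graph_fun_eq_rigid_series: "graph_fun F z = Re (z * cnj z + rigid_series F z (cnj z))"
  unfolding graph_fun_def rigid_series_def ..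

lemma rigid_series_0_right [simp]: "rigid_series F z 0 = 0"
  unfolding rigid_series_def by (rule infsum_0) (auto simp: idx2_def)

lemma norm_rigid_term_le:
  fixes F :: "nat \<Rightarrow> nat \<Rightarrow> complex"
  assumes "(j, k) \<in> idx2" "0 < r" "norm z \<le> r" "norm \<zeta> \<le> r"
  shows "norm (F j k * z ^ j * \<zeta> ^ k) \<le> norm (F j k) * r ^ (j + k) * (norm \<zeta> / r)\<^sup>2"
proof -
  obtain l where k: "k = l + 2"
    using assms(1) unfolding idx2_def by (metis add.commute case_prodD le_Suc_ex mem_Collect_eq)
  have "norm z ^ j * norm \<zeta> ^ k = (norm z ^ j * norm \<zeta> ^ l) * (norm \<zeta>)\<^sup>2"
    by (simp add: k power_add power2_eq_square)
  also have "\<dots> \<le> (r ^ j * r ^ l) * (norm \<zeta>)\<^sup>2"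
    using assms by (intro mult_right_mono mult_mono power_mono) auto
  also have "\<dots> = r ^ (j + k) * (norm \<zeta> / r)\<^sup>2"
    using assms(2) by (simp add: k power_add power2_eq_square field_simps)
  finally show ?thesis
    by (simp add: norm_mult norm_power mult.assoc mult_left_mono)
qed

lemma norm_rigid_series_le:
  assumes "polydisc_summable F r" "norm z \<le> r" "norm \<zeta> \<le> r"
  shows "norm (rigid_series F z \<zeta>) \<le> (\<Sum>\<^sub>\<infinity>(j,k)\<in>idx2. norm (F j k) * r ^ (j + k)) * (norm \<zeta> / r)\<^sup>2"
proof -
  let ?term = "\<lambda>(j,k). F j k * z ^ j * \<zeta> ^ k" and ?M = "\<lambda>(j,k). norm (F j k) * r ^ (j + k)"
  have "?M summable_on idx2" "0 < r"
    using assms(1) unfolding polydisc_summable_def by auto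
  then have M: "((\<lambda>p. ?M p * (norm \<zeta> / r)\<^sup>2) has_sum infsum ?M idx2 * (norm \<zeta> / r)\<^sup>2) idx2"
    by (intro has_sum_cmult_left has_sum_infsum)
  have le: "norm (?term p) \<le> ?M p * (norm \<zeta> / r)\<^sup>2" if "p \<in> idx2" for p
    using that norm_rigid_term_le[OF _ \<open>0 < r\<close> assms(2,3)] by (cases p) simp
  have "?term summable_on idx2"
    using Infinite_Sum.abs_summable_on_comparison_test'[OF has_sum_imp_summable[OF M] le] abs_summable_summable by blast
  then show ?thesis
    unfolding rigid_series_def using norm_infsum_le[OF has_sum_infsum M le] by simp
qed

lemma holomorphic_on_infsum:
  fixes h :: "'a \<Rightarrow> complex \<Rightarrow> complex"
  assumes "open S" "M summable_on I"
    and holo: "\<And>i. i \<in> I \<Longrightarrow> h i holomorphic_on S"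
    and bound: "\<And>i s. i \<in> I \<Longrightarrow> s \<in> S \<Longrightarrow> norm (h i s) \<le> M i"
  shows "(\<lambda>s. \<Sum>\<^sub>\<infinity>i\<in>I. h i s) holomorphic_on S"
proof -
  have "(\<lambda>s. \<Sum>\<^sub>\<infinity>i\<in>I. h i s) holomorphic_on ball x d" if "cball x d \<subseteq> S" for x d
  proof -
    have "uniform_limit (cball x d) (\<lambda>X s. \<Sum>i\<in>X. h i s) (\<lambda>s. \<Sum>\<^sub>\<infinity>i\<in>I. h i s)
        (finite_subsets_at_top I)"
      by (rule Weierstrass_m_test_general[OF _ assms(2)]) (use bound that in auto)
    moreover have "h i holomorphic_on cball x d" if "i \<in> I" for i
      using holo holomorphic_on_subset \<open>cball x d \<subseteq> S\<close> that by blast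
    then have "\<forall>\<^sub>F X in finite_subsets_at_top I. continuous_on (cball x d) (\<lambda>s. \<Sum>i\<in>X. h i s)
        \<and> (\<lambda>s. \<Sum>i\<in>X. h i s) holomorphic_on ball x d"
      by (intro eventually_finite_subsets_at_top_weakI conjI continuous_on_sum holomorphic_on_sum)
         (auto intro: holomorphic_on_imp_continuous_on holomorphic_on_subset[OF _ ball_subset_cball])
    ultimately show ?thesis
      by (elim holomorphic_uniform_limit) simp_all
  qed
  then show ?thesis
    using \<open>open S\<close> by (metis analytic_on_def analytic_on_open open_contains_cball)
qed

lemma holomorphic_on_rigid_series:
  assumes "polydisc_summable F r" "open S" "a holomorphic_on S" "b holomorphic_on S"
    and "\<And>s. s \<in> S \<Longrightarrow> norm (a s) \<le> r \<and> norm (b s) \<le> r"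
  shows "(\<lambda>s. rigid_series F (a s) (b s)) holomorphic_on S"
  unfolding rigid_series_def
proof (rule holomorphic_on_infsum[where M = "\<lambda>(j,k). norm (F j k) * r ^ (j + k)"])
  show "(\<lambda>(j,k). norm (F j k) * r ^ (j + k)) summable_on idx2"
    using assms(1) unfolding polydisc_summable_def by simp
  fix p s assume "p \<in> idx2" "s \<in> S"
  obtain j k where p: "p = (j, k)"
    by fastforce
  have "0 < r" "norm (a s) \<le> r" "norm (b s) \<le> r"
    using assms(1,5) \<open>s \<in> S\<close> unfolding polydisc_summable_def by auto
  then have "norm (F j k * a s ^ j * b s ^ k) \<le> norm (F j k) * r ^ (j + k) * (norm (b s) / r)\<^sup>2"
    using \<open>p \<in> idx2\<close> p by (intro norm_rigid_term_le) auto
  also have "\<dots> \<le> norm (F j k) * r ^ (j + k)"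
    using \<open>0 < r\<close> \<open>norm (b s) \<le> r\<close> by (intro mult_left_le) (auto simp: power_le_one)
  finally show "norm ((\<lambda>(j,k). F j k * a s ^ j * b s ^ k) p) \<le> (\<lambda>(j,k). norm (F j k) * r ^ (j + k)) p"
    by (simp add: p)
qed (use assms in \<open>auto intro!: holomorphic_intros\<close>)

lemma rigid_series_conj_diagonal_real:
  assumes "\<forall>j k. F k j = cnj (F j k)"
  shows "cnj (rigid_series F z (cnj z)) = rigid_series F z (cnj z)"
proof -
  let ?term = "\<lambda>(j,k). F j k * z ^ j * cnj z ^ k"
  have cnj_F: "cnj (F j k) = F k j" for j k
    using arg_cong[OF spec[OF spec[OF assms, of k], of j], of cnj] by simp
  have "cnj (rigid_series F z (cnj z)) = (\<Sum>\<^sub>\<infinity>p\<in>idx2. cnj (?term p))"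
    unfolding rigid_series_def by simp
  also have "\<dots> = infsum (?term \<circ> prod.swap) idx2"
  proof (rule infsum_cong)
    fix p :: "nat \<times> nat"
    show "cnj (?term p) = (?term \<circ> prod.swap) p"
      by (cases p) (simp add: cnj_F)
  qed
  also have "\<dots> = infsum ?term (prod.swap ` idx2)"
    by (rule infsum_reindex[symmetric]) auto
  also have "prod.swap ` idx2 = idx2"
    unfolding idx2_def by force
  finally show ?thesis
    unfolding rigid_series_def .
qed

lemma of_real_graph_fun:
  assumes "\<forall>j k. F k j = cnj (F j k)"
  shows "of_real (graph_fun F z) = z * cnj z + rigid_series F z (cnj z)"
  using rigid_series_conj_diagonal_real[OF assms, of z]
  by (simp add: graph_fun_eq_rigid_series complex_eq_iff)

lemma has_field_derivative_0_if_quadratic_bound: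
  fixes h :: "'a::real_normed_field \<Rightarrow> 'a"
  assumes "h 0 = 0" "\<forall>\<^sub>F x in at 0. norm (h x) \<le> C * (norm x)\<^sup>2"
  shows "(h has_field_derivative 0) (at 0)"
  unfolding has_field_derivative_iff
proof (rule Lim_null_comparison)
  show "\<forall>\<^sub>F x in at 0. norm ((h x - h 0) / (x - 0)) \<le> C * norm x"
    using assms(2) eventually_neq_at_within[of 0 0 UNIV]
    by eventually_elim (simp add: assms(1) norm_divide divide_le_eq power2_eq_square mult.assoc)
  show "((\<lambda>x. C * norm x) \<longlongrightarrow> 0) (at 0)"
    by (auto intro!: tendsto_eq_intros)
qed

lemma has_field_derivative_rigid_series:
  assumes "polydisc_summable F r" "norm z \<le> r"
  shows "(rigid_series F z has_field_derivative 0) (at 0)"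
proof (rule has_field_derivative_0_if_quadratic_bound)
  define M where "M = (\<Sum>\<^sub>\<infinity>(j,k)\<in>idx2. norm (F j k) * r ^ (j + k))"
  have "\<forall>\<^sub>F \<zeta> in at 0. norm \<zeta> \<le> r"
    using assms(1) unfolding polydisc_summable_def eventually_at by (auto intro!: exI[of _ r])
  then show "\<forall>\<^sub>F \<zeta> in at 0. norm (rigid_series F z \<zeta>) \<le> M / r\<^sup>2 * (norm \<zeta>)\<^sup>2"
  proof eventually_elim
    case (elim \<zeta>)
    show ?case
      using norm_rigid_series_le[OF assms elim] unfolding M_def[symmetric] by (simp add: power_divide)
  qed
qed simp

lemma holomorphic_vanishing_on_connected:
  assumes "h holomorphic_on S" "open S" "connected S"
    and "U \<subseteq> S" "connected U" "a \<in> U" "b \<in> U" "a \<noteq> b"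
    and "\<And>u. u \<in> U \<Longrightarrow> h u = 0" "x \<in> S"
  shows "h x = 0"
proof (rule analytic_continuation[OF assms(1-4)])
  show "a islimpt U"
    using assms(5-8) by (intro connected_imp_perfect) auto
qed (use assms in auto)

lemma eq_0_if_eq_0_on_conj_diagonal:
  fixes \<Phi> :: "complex \<Rightarrow> complex \<Rightarrow> complex"
  assumes lines: "\<And>u. norm u = 1 \<Longrightarrow> (\<lambda>t. \<Phi> (t * u) (t * cnj u)) holomorphic_on ball 0 R"
    and first: "\<And>\<zeta>. \<zeta> \<in> ball 0 R \<Longrightarrow> (\<lambda>z. \<Phi> z \<zeta>) holomorphic_on ball 0 R"
    and second: "\<And>z. z \<in> ball 0 R \<Longrightarrow> \<Phi> z holomorphic_on ball 0 R"
    and diagonal: "\<And>z. z \<in> ball 0 R \<Longrightarrow> \<Phi> z (cnj z) = 0"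
    and "z \<in> ball 0 R" "\<zeta> \<in> ball 0 R"
  shows "\<Phi> z \<zeta> = 0"
proof -
  have line: "\<Phi> (t * u) (t * cnj u) = 0" if "norm u = 1" "t \<in> ball 0 R" for t u
  proof (rule holomorphic_vanishing_on_connected[OF lines[OF \<open>norm u = 1\<close>] _ _ _ _ _ _ _ _ \<open>t \<in> ball 0 R\<close>])
    have "0 < R"
      using \<open>t \<in> ball 0 R\<close> norm_ge_zero[of t] unfolding mem_ball_0 by linarith
    then show "of_real (R / 2) \<in> \<real> \<inter> ball (0::complex) R" "0 \<in> \<real> \<inter> ball (0::complex) R"
      "of_real (R / 2) \<noteq> (0::complex)"
      by auto
    show "connected (\<real> \<inter> ball (0::complex) R)"
      by (rule convex_connected) (intro convex_Int convex_Reals convex_ball)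
    show "\<Phi> (s * u) (s * cnj u) = 0" if "s \<in> \<real> \<inter> ball 0 R" for s
    proof -
      have "s * u \<in> ball 0 R" "cnj (s * u) = s * cnj u"
        using that \<open>norm u = 1\<close> by (auto simp: norm_mult elim!: Reals_cases)
      then show ?thesis
        using diagonal by metis
    qed
  qed auto
  txt \<open>With t^2 = z \<zeta> and u = z / t, the point (z, \<zeta>) is (t u, t cnj u).\<close>
  have same_norm: "\<Phi> z \<zeta> = 0" if "norm z = norm \<zeta>" "z \<in> ball 0 R" for z \<zeta>
  proof (cases "z = 0")
    case True
    then show ?thesis
      using that diagonal[of 0] by auto
  next
    case False
    define t where "t = csqrt (z * \<zeta>)"
    have t2: "t\<^sup>2 = z * \<zeta>"
      by (simp add: t_def)
    have "(norm t)\<^sup>2 = norm (z * \<zeta>)"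
      by (simp flip: t2 add: norm_power)
    then have "(norm t)\<^sup>2 = (norm z)\<^sup>2"
      using \<open>norm z = norm \<zeta>\<close> by (simp add: norm_mult power2_eq_square)
    then have norm_t: "norm t = norm z"
      by (simp add: power2_eq_iff_nonneg)
    then have "t \<noteq> 0" and t_cnj_t: "t * cnj t = z * cnj z"
      using False by (auto simp: complex_norm_square[symmetric])
    then have "t * cnj (z / t) = t\<^sup>2 * cnj z / (t * cnj t)"
      by (simp add: power2_eq_square field_simps)
    also have "\<dots> = \<zeta>"
      using False by (simp add: t2 t_cnj_t field_simps)
    finally have "t * cnj (z / t) = \<zeta>" .
    moreover have "norm (z / t) = 1" "t \<in> ball 0 R"
      using norm_t False \<open>z \<in> ball 0 R\<close> by (auto simp: norm_divide)
    ultimately show ?thesis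
      using line[of "z / t" t] \<open>t \<noteq> 0\<close> by simp
  qed
  have circle: "h x = 0"
    if "h holomorphic_on ball 0 R" "0 < r" "r < R" "\<And>y. norm y = r \<Longrightarrow> h y = 0" "x \<in> ball 0 R"
    for h r x
  proof (rule holomorphic_vanishing_on_connected[OF that(1) _ _ _ _ _ _ _ _ that(5)])
    show "of_real r \<in> sphere (0::complex) r" "- of_real r \<in> sphere (0::complex) r"
      "of_real r \<noteq> - (of_real r :: complex)"
      using \<open>0 < r\<close> by auto
  qed (use that connected_sphere[of "0::complex" r] in auto)
  consider "z \<noteq> 0" | "\<zeta> \<noteq> 0" | "z = 0" "\<zeta> = 0"
    by blast
  then show ?thesis
  proof cases
    case 1
    show ?thesis
    proof (rule circle[OF second[OF \<open>z \<in> ball 0 R\<close>] _ _ _ \<open>\<zeta> \<in> ball 0 R\<close>])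
      show "0 < norm z" "norm z < R"
        using 1 \<open>z \<in> ball 0 R\<close> by auto
      show "\<Phi> z y = 0" if "norm y = norm z" for y
        using same_norm[of z y] that \<open>z \<in> ball 0 R\<close> by simp
    qed
  next
    case 2
    show ?thesis
    proof (rule circle[OF first[OF \<open>\<zeta> \<in> ball 0 R\<close>] _ _ _ \<open>z \<in> ball 0 R\<close>])
      show "0 < norm \<zeta>" "norm \<zeta> < R"
        using 2 \<open>\<zeta> \<in> ball 0 R\<close> by auto
      show "\<Phi> y \<zeta> = 0" if "norm y = norm \<zeta>" for y
        using same_norm[of y \<zeta>] that \<open>\<zeta> \<in> ball 0 R\<close> by simp
    qed
  next
    case 3
    then show ?thesis
      using diagonal[of 0] \<open>z \<in> ball 0 R\<close> by simp
  qed
qed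

lemma tendsto_graph_fun_0:
  assumes "polydisc_summable F r"
  shows "(graph_fun F \<longlongrightarrow> 0) (nhds 0)"
proof (rule Lim_null_comparison)
  define C where "C = 1 + (\<Sum>\<^sub>\<infinity>(j,k)\<in>idx2. norm (F j k) * r ^ (j + k)) / r\<^sup>2"
  have "\<forall>\<^sub>F z in nhds 0. norm z \<le> r"
    using assms unfolding polydisc_summable_def eventually_nhds_metric by (auto intro!: exI[of _ r])
  then show "\<forall>\<^sub>F z in nhds 0. norm (graph_fun F z) \<le> C * (norm z)\<^sup>2"
  proof eventually_elim
    case (elim z)
    have "norm (graph_fun F z) \<le> norm (z * cnj z + rigid_series F z (cnj z))"
      unfolding graph_fun_eq_rigid_series real_norm_def by (rule abs_Re_le_cmod)
    also have "\<dots> \<le> norm (z * cnj z) + norm (rigid_series F z (cnj z))"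
      by (rule norm_triangle_ineq)
    also have "\<dots> \<le> C * (norm z)\<^sup>2"
      using norm_rigid_series_le[OF assms elim, of "cnj z"] elim
      by (simp add: C_def norm_mult power2_eq_square power_divide distrib_right)
    finally show ?case .
  qed
  show "((\<lambda>z. C * (norm z)\<^sup>2) \<longlongrightarrow> 0) (nhds (0::complex))"
    by (auto intro!: tendsto_eq_intros filterlim_ident)
qed

text \<open>
  The defect \<rho> u + Re g(z) - graph_fun F' (f z) at the point (z, u) of M, with cnj z replaced
  by \<zeta> and every antiholomorphic term cnj (h z) by its reflection (cnj \<circ> h \<circ> cnj) \<zeta>.
\<close>
definition polarized_defect ::
    "(nat \<Rightarrow> nat \<Rightarrow> complex) \<Rightarrow> (nat \<Rightarrow> nat \<Rightarrow> complex) \<Rightarrow> (complex \<Rightarrow> complex) \<Rightarrow>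
     (complex \<Rightarrow> complex) \<Rightarrow> real \<Rightarrow> complex \<Rightarrow> complex \<Rightarrow> complex" where
  "polarized_defect F F' f g \<rho> z \<zeta> =
     of_real \<rho> * (z * \<zeta> + rigid_series F z \<zeta>) + (g z + (cnj \<circ> g \<circ> cnj) \<zeta>) / 2
     - f z * (cnj \<circ> f \<circ> cnj) \<zeta> - rigid_series F' (f z) ((cnj \<circ> f \<circ> cnj) \<zeta>)"

lemma polarized_defect_conj_diagonal_eq_0_iff:
  assumes "\<forall>j k. F k j = cnj (F j k)" "\<forall>j k. F' k j = cnj (F' j k)"
  shows "polarized_defect F F' f g \<rho> z (cnj z) = 0 \<longleftrightarrow>
    (f z, of_real \<rho> * of_real (graph_fun F z) + g z) \<in> rigid_hyp F'"
proof -
  have "polarized_defect F F' f g \<rho> z (cnj z) =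
      of_real (\<rho> * graph_fun F z + Re (g z) - graph_fun F' (f z))"
    using of_real_graph_fun[OF assms(1), of z] of_real_graph_fun[OF assms(2), of "f z"]
    by (simp add: polarized_defect_def complex_add_cnj)
  then show ?thesis
    unfolding rigid_hyp_def by (simp only: of_real_eq_0_iff) auto
qed

lemma linear_if_mult_cnj_deriv_eq:
  assumes "(f has_field_derivative a) (at 0)" "a \<noteq> 0" "0 < R"
    and "\<And>z. z \<in> ball 0 R \<Longrightarrow> f z * cnj a = of_real \<rho> * z"
  shows "\<rho> = (norm a)\<^sup>2 \<and> (\<forall>z\<in>ball 0 R. f z = a * z)"
proof -
  define c where "c = of_real \<rho> / cnj a"
  have "((\<lambda>z. c * z) has_field_derivative c) (at 0)"
    by (auto intro!: derivative_eq_intros)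
  then have "(f has_field_derivative c) (at 0)"
    by (rule has_field_derivative_transform_within_open[OF _ open_ball[of 0 R]])
       (use assms in \<open>auto simp: c_def field_simps\<close>)
  then have "a = of_real \<rho> / cnj a"
    unfolding c_def
    by (rule DERIV_unique[OF assms(1)])
  then have "a * cnj a = of_real \<rho>"
    using \<open>a \<noteq> 0\<close> by (simp add: field_simps)
  then have "\<rho> = (norm a)\<^sup>2"
    by (metis complex_norm_square of_real_eq_iff)
  moreover have "f z = a * z" if "z \<in> ball 0 R" for z
  proof -
    have "f z * cnj a = a * z * cnj a"
      using assms(4)[OF that] \<open>a * cnj a = of_real \<rho>\<close> by (simp add: mult_ac)
    then show ?thesis
      using \<open>a \<noteq> 0\<close> by simp
  qed
  ultimately show ?thesis
    by blast
qed

locale rigid_map_on_disc =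
  fixes F F' :: "nat \<Rightarrow> nat \<Rightarrow> complex" and f g :: "complex \<Rightarrow> complex" and R r r' :: real
  assumes summable_F: "polydisc_summable F r" and summable_F': "polydisc_summable F' r'"
    and R_pos: "0 < R"
    and holo_f: "f holomorphic_on ball 0 R" and holo_g: "g holomorphic_on ball 0 R"
    and bounded: "\<And>z. z \<in> ball 0 R \<Longrightarrow> norm z \<le> r \<and> norm (f z) \<le> r'"
begin

lemma holomorphic_on_polarized_defect:
  assumes "open S" "a holomorphic_on S" "b holomorphic_on S" "a ` S \<subseteq> ball 0 R" "b ` S \<subseteq> ball 0 R"
  shows "(\<lambda>s. polarized_defect F F' f g \<rho> (a s) (b s)) holomorphic_on S"
proof -
  have compose: "(\<lambda>s. h (c s)) holomorphic_on S"
    if "h holomorphic_on ball 0 R" "c holomorphic_on S" "c ` S \<subseteq> ball 0 R" for h c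
    using holomorphic_on_compose_gen[OF that(2,1,3)] by (simp add: o_def)
  have "cnj ` ball 0 R = ball 0 R"
    by (auto simp: image_cnj_conv_vimage_cnj)
  then have reflect: "(cnj \<circ> h \<circ> cnj) holomorphic_on ball 0 R" if "h holomorphic_on ball 0 R" for h
    using that by (intro holomorphic_on_compose_cnj_cnj) auto
  have f_a: "(\<lambda>s. f (a s)) holomorphic_on S" and g_a: "(\<lambda>s. g (a s)) holomorphic_on S"
    and f_b: "(\<lambda>s. (cnj \<circ> f \<circ> cnj) (b s)) holomorphic_on S"
    and g_b: "(\<lambda>s. (cnj \<circ> g \<circ> cnj) (b s)) holomorphic_on S"
    using compose[OF _ assms(2,4)] compose[OF _ assms(3,5)] holo_f holo_g reflect by blast+
  have "norm (a s) \<le> r \<and> norm (b s) \<le> r" "norm (f (a s)) \<le> r' \<and> norm ((cnj \<circ> f \<circ> cnj) (b s)) \<le> r'"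
    if "s \<in> S" for s
    using bounded[of "a s"] bounded[of "b s"] bounded[of "cnj (b s)"] assms(4,5) that by auto
  then have "(\<lambda>s. rigid_series F (a s) (b s)) holomorphic_on S"
    and "(\<lambda>s. rigid_series F' (f (a s)) ((cnj \<circ> f \<circ> cnj) (b s))) holomorphic_on S"
    by (intro holomorphic_on_rigid_series[OF summable_F assms(1-3)]
        holomorphic_on_rigid_series[OF summable_F' assms(1) f_a f_b]; blast)+
  then show ?thesis
    unfolding polarized_defect_def
    by (intro holomorphic_intros f_a g_a f_b g_b assms(2,3)) auto
qed

lemma polarized_defect_eq_0:
  assumes "\<And>z. z \<in> ball 0 R \<Longrightarrow> polarized_defect F F' f g \<rho> z (cnj z) = 0"
    and "z \<in> ball 0 R" "\<zeta> \<in> ball 0 R"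
  shows "polarized_defect F F' f g \<rho> z \<zeta> = 0"
proof (rule eq_0_if_eq_0_on_conj_diagonal[where \<Phi> = "polarized_defect F F' f g \<rho>"])
  show "(\<lambda>t. polarized_defect F F' f g \<rho> (t * u) (t * cnj u)) holomorphic_on ball 0 R" if "norm u = 1" for u
    using that by (intro holomorphic_on_polarized_defect) (auto intro!: holomorphic_intros simp: norm_mult)
  show "(\<lambda>z. polarized_defect F F' f g \<rho> z \<zeta>) holomorphic_on ball 0 R" if "\<zeta> \<in> ball 0 R" for \<zeta>
    using that by (intro holomorphic_on_polarized_defect) (auto intro!: holomorphic_intros)
  show "polarized_defect F F' f g \<rho> z holomorphic_on ball 0 R" if "z \<in> ball 0 R" for z
  proof -
    have "(\<lambda>_. z) ` ball 0 R \<subseteq> ball 0 R"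
      using that by auto
    then show ?thesis
      using holomorphic_on_polarized_defect[of "ball 0 R" "\<lambda>_. z" "\<lambda>\<zeta>. \<zeta>"] by auto
  qed
qed (use assms in auto)

lemma has_field_derivative_polarized_defect:
  assumes "f 0 = 0" "z \<in> ball 0 R"
  shows "(polarized_defect F F' f g \<rho> z has_field_derivative
           of_real \<rho> * z + cnj (deriv g 0) / 2 - f z * cnj (deriv f 0)) (at 0)"
proof -
  have "(f has_field_derivative deriv f 0) (at (cnj 0))" "(g has_field_derivative deriv g 0) (at (cnj 0))"
    using holo_f holo_g R_pos by (auto intro: holomorphic_derivI)
  from this[THEN has_field_derivative_cnj_cnj]
  have reflect_f: "((\<lambda>\<zeta>. cnj (f (cnj \<zeta>))) has_field_derivative cnj (deriv f 0)) (at 0)"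
    and reflect_g: "((\<lambda>\<zeta>. cnj (g (cnj \<zeta>))) has_field_derivative cnj (deriv g 0)) (at 0)"
    by (simp_all add: comp_def)
  have "(rigid_series F' (f z) has_field_derivative 0) (at (cnj (f (cnj 0))))"
    using bounded[OF assms(2)] assms(1) by (auto intro: has_field_derivative_rigid_series[OF summable_F'])
  from DERIV_chain2[OF this reflect_f]
  have "((\<lambda>\<zeta>. rigid_series F' (f z) (cnj (f (cnj \<zeta>)))) has_field_derivative 0) (at 0)"
    by simp
  moreover have "(rigid_series F z has_field_derivative 0) (at 0)"
    using bounded[OF assms(2)] by (intro has_field_derivative_rigid_series[OF summable_F]) auto
  ultimately show ?thesis
    unfolding polarized_defect_def[abs_def] comp_def
    by (auto intro!: derivative_eq_intros reflect_f reflect_g)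
qed

lemma linear_relation_if_polarized_defect_eq_0:
  assumes "\<And>z \<zeta>. z \<in> ball 0 R \<Longrightarrow> \<zeta> \<in> ball 0 R \<Longrightarrow> polarized_defect F F' f g \<rho> z \<zeta> = 0"
    and "f 0 = 0" "g 0 = 0" "z \<in> ball 0 R"
  shows "g z = 0 \<and> f z * cnj (deriv f 0) = of_real \<rho> * z"
proof -
  txt \<open>At \<zeta> = 0 the defect reduces to g w / 2.\<close>
  have g_eq_0: "g w = 0" if "w \<in> ball 0 R" for w
    using assms(1)[OF that, of 0] R_pos assms(2,3) by (simp add: polarized_defect_def)
  have "(g has_field_derivative 0) (at 0)"
    using g_eq_0 R_pos by (intro has_field_derivative_transform_within_open[OF DERIV_const open_ball[of 0 R]]) auto
  then have "deriv g 0 = 0"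
    by (rule DERIV_imp_deriv)
  moreover have "(polarized_defect F F' f g \<rho> z has_field_derivative 0) (at 0)"
    using assms(1,4) R_pos
    by (intro has_field_derivative_transform_within_open[OF DERIV_const open_ball[of 0 R]]) auto
  ultimately have "of_real \<rho> * z - f z * cnj (deriv f 0) = 0"
    using DERIV_unique[OF has_field_derivative_polarized_defect[OF assms(2,4)]] by simp
  then show ?thesis
    using g_eq_0[OF assms(4)] by simp
qed

end

lemma rigid_map_on_small_disc:
  assumes F: "polydisc_summable F r" and F': "polydisc_summable F' r'" and "0 < \<epsilon>"
    and "f holomorphic_on ball 0 \<epsilon>" "g holomorphic_on ball 0 \<epsilon>" "f 0 = 0"
  obtains R where "rigid_map_on_disc F F' f g R r r'"
    and "\<And>z. z \<in> ball 0 R \<Longrightarrow> norm z < \<epsilon> \<and> \<bar>graph_fun F z\<bar> < \<epsilon>"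
proof -
  have "(f \<longlongrightarrow> 0) (nhds 0)"
    using continuous_on_interior[OF holomorphic_on_imp_continuous_on[OF assms(4)], of 0] assms(3,6)
    by (simp add: continuous_at tendsto_nhds_iff)
  then have "\<forall>\<^sub>F z in nhds 0. dist (f z) 0 < r'" "\<forall>\<^sub>F z in nhds 0. dist (graph_fun F z) 0 < \<epsilon>"
    using tendsto_graph_fun_0[OF F] F' assms(3) unfolding polydisc_summable_def
    by (blast intro: tendstoD)+
  moreover have "\<forall>\<^sub>F z in nhds 0. norm z < min r \<epsilon>"
    using F assms(3) unfolding eventually_nhds_metric polydisc_summable_def
    by (intro exI[of _ "min r \<epsilon>"]) (auto simp: dist_norm)
  ultimately have "\<forall>\<^sub>F z in nhds 0. norm z < min r \<epsilon> \<and> norm (f z) < r' \<and> \<bar>graph_fun F z\<bar> < \<epsilon>"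
    by eventually_elim simp
  then obtain R where "0 < R"
    and small: "\<And>z. z \<in> ball 0 R \<Longrightarrow> norm z < min r \<epsilon> \<and> norm (f z) < r' \<and> \<bar>graph_fun F z\<bar> < \<epsilon>"
    unfolding eventually_nhds_metric mem_ball dist_commute[of 0] by blast
  then have "ball (0::complex) R \<subseteq> ball 0 \<epsilon>"
    by auto
  then have "rigid_map_on_disc F F' f g R r r'"
    using F F' \<open>0 < R\<close> small assms(4,5) by unfold_locales (auto intro: holomorphic_on_subset less_imp_le)
  then show thesis
    using that small by auto
qed

theorem lemma2p12:
  fixes F F' :: "nat \<Rightarrow> nat \<Rightarrow> complex"
    and f g :: "complex \<Rightarrow> complex"
    and \<rho> :: real and \<epsilon> :: real
  assumes "rigid_coeffs F" and "rigid_coeffs F'"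
    and "\<rho> \<noteq> 0"
    and "\<epsilon> > 0"
    and "f holomorphic_on ball 0 \<epsilon>" and "g holomorphic_on ball 0 \<epsilon>"
    and "f 0 = 0" and "g 0 = 0"
    and "deriv f 0 \<noteq> 0"
    and "\<forall>z w. (z, w) \<in> rigid_hyp F \<and> norm z < \<epsilon> \<and> norm w < \<epsilon> \<longrightarrow>
           (f z, of_real \<rho> * w + g z) \<in> rigid_hyp F'"
  shows "\<rho> > 0 \<and> (\<exists>\<phi>::real. \<exists>\<delta>>0. \<forall>z\<in>ball 0 \<delta>.
           f z = of_real (sqrt \<rho>) * exp (\<i> * of_real \<phi>) * z \<and> g z = 0)"
proof -
  have hermitian: "\<forall>j k. F k j = cnj (F j k)" "\<forall>j k. F' k j = cnj (F' j k)"
    using assms(1,2) unfolding rigid_coeffs_def by blast+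
  obtain r r' where F: "polydisc_summable F r" and F': "polydisc_summable F' r'"
    using assms(1,2) unfolding rigid_coeffs_def polydisc_summable_def by blast
  obtain R where "rigid_map_on_disc F F' f g R r r'"
    and small: "\<And>z. z \<in> ball 0 R \<Longrightarrow> norm z < \<epsilon> \<and> \<bar>graph_fun F z\<bar> < \<epsilon>"
    using rigid_map_on_small_disc[OF F F' assms(4-7)] by blast
  interpret rigid_map_on_disc F F' f g R r r'
    by fact
  have diagonal: "polarized_defect F F' f g \<rho> z (cnj z) = 0" if "z \<in> ball 0 R" for z
    using assms(10)[rule_format, of z "of_real (graph_fun F z)"] small[OF that] unfolding polarized_defect_conj_diagonal_eq_0_iff[OF hermitian]
    by (simp add: rigid_hyp_def)
  have "g z = 0 \<and> f z * cnj (deriv f 0) = of_real \<rho> * z" if "z \<in> ball 0 R" for z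
    using linear_relation_if_polarized_defect_eq_0[OF polarized_defect_eq_0[OF diagonal] assms(7,8) that] .
  moreover have "(f has_field_derivative deriv f 0) (at 0)"
    using holomorphic_derivI[OF holo_f open_ball] R_pos by simp
  ultimately have "\<rho> = (norm (deriv f 0))\<^sup>2" "\<forall>z\<in>ball 0 R. f z = deriv f 0 * z \<and> g z = 0"
    using linear_if_mult_cnj_deriv_eq[of f "deriv f 0" R \<rho>] assms(9) R_pos by auto
  moreover have "of_real (sqrt ((norm (deriv f 0))\<^sup>2)) * exp (\<i> * of_real (Arg (deriv f 0))) = deriv f 0"
    using rcis_cmod_Arg[of "deriv f 0"] by (simp add: rcis_def cis_conv_exp)
  ultimately show ?thesis
    using assms(9) R_pos by (intro conjI exI[of _ "Arg (deriv f 0)"] exI[of _ R]) auto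
qed

end
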